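(* Let $C\in(\frac{\beta u_0-1}{r},\frac{\beta u_0}{r})$ with $C>\xi_2(\beta)$. Then there exists a unique $z_g^C\in(d,\infty)$ such that the function $g_C=H_{C,z_g^C}\mathbf 1_{[d,z_g^C]}+K_{z_g^C}\mathbf 1_{(z_g^C,\infty)}$ is bounded and solves Problem 2 with $g_C(d)=C$. Moreover, the map $C\mapsto z_g^C$ is increasing and $z_g^{\xi_2(\beta)}=d$, where for $C=\xi_2(\beta)$ the quantity $z_g^C$ denotes the point $t\in[d,\infty)$ with $H_{C,t}(t)=K_t(t)$.
   Context: Fix $\mu\in\mathbb R$, $\sigma>0$, $u_0>0$, $r>0$, $\beta>0$, $d>0$. For $u\in[0,u_0]$ let $\theta_1(u)=\frac{\sqrt{(\mu-u)^2+2r\sigma^2}+(\mu-u)}{\sigma^2}$, $\theta_2(u)=\frac{\sqrt{(\mu-u)^2+2r\sigma^2}-(\mu-u)}{\sigma^2}$; write $\alpha_i=\theta_i(u_0)$, $\gamma_i=\theta_i(0)$ ($i=1,2$). Let $\xi_2(\beta)=\frac{\beta u_0-1}{r}+\frac{\beta}{\alpha_2}$. For $t\ge d$ and real $C$ define for $z\ge d$ $$H_{C,t}(z)=-\frac1r+\frac{C+\frac1r-\frac{\beta}{\gamma_2}e^{-\gamma_2(d-t)}}{e^{\gamma_1d}+\frac{\gamma_1}{\gamma_2}e^{(\gamma_1+\gamma_2)t}e^{-\gamma_2d}}\Big(e^{\gamma_1z}+\frac{\gamma_1}{\gamma_2}e^{(\gamma_1+\gamma_2)t}e^{-\gamma_2z}\Big)+\frac{\beta}{\gamma_2}e^{-\gamma_2(z-t)},$$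 $$K_t(z)=\frac{\beta u_0-1}{r}+\frac{\beta}{\alpha_2}e^{-\alpha_2(z-t)}.$$ Problem 2: a bounded twice continuously differentiable function $g$ on $[d,\infty)$ satisfying $-rg(z)-\mu g'(z)+\frac{\sigma^2}{2}g''(z)+\sup_{u\in[0,u_0]}\{(\beta+g'(z))u\}=1$ for $z\ge d$ (right derivatives at $d$). *)

theory Defs
  imports "HOL-Analysis.Analysis"
begin

definition theta1 :: "real \<Rightarrow> real \<Rightarrow> real \<Rightarrow> real \<Rightarrow> real" where
  "theta1 \<mu> \<sigma> r u = (sqrt ((\<mu> - u)\<^sup>2 + 2 * r * \<sigma>\<^sup>2) + (\<mu> - u)) / \<sigma>\<^sup>2"

definition theta2 :: "real \<Rightarrow> real \<Rightarrow> real \<Rightarrow> real \<Rightarrow> real" where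
  "theta2 \<mu> \<sigma> r u = (sqrt ((\<mu> - u)\<^sup>2 + 2 * r * \<sigma>\<^sup>2) - (\<mu> - u)) / \<sigma>\<^sup>2"

definition xi2 :: "real \<Rightarrow> real \<Rightarrow> real \<Rightarrow> real \<Rightarrow> real \<Rightarrow> real" where
  "xi2 \<mu> \<sigma> r u0 \<beta> = (\<beta> * u0 - 1) / r + \<beta> / theta2 \<mu> \<sigma> r u0"

definition Hfun :: "real \<Rightarrow> real \<Rightarrow> real \<Rightarrow> real \<Rightarrow> real \<Rightarrow> real \<Rightarrow> real \<Rightarrow> real \<Rightarrow> real" where
  "Hfun \<mu> \<sigma> r \<beta> d C t z =
     (let \<gamma>1 = theta1 \<mu> \<sigma> r 0; \<gamma>2 = theta2 \<mu> \<sigma> r 0 in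
       - 1 / r
       + (C + 1 / r - \<beta> / \<gamma>2 * exp (- \<gamma>2 * (d - t)))
         / (exp (\<gamma>1 * d) + \<gamma>1 / \<gamma>2 * exp ((\<gamma>1 + \<gamma>2) * t) * exp (- \<gamma>2 * d))
         * (exp (\<gamma>1 * z) + \<gamma>1 / \<gamma>2 * exp ((\<gamma>1 + \<gamma>2) * t) * exp (- \<gamma>2 * z))
       + \<beta> / \<gamma>2 * exp (- \<gamma>2 * (z - t)))"

definition Kfun :: "real \<Rightarrow> real \<Rightarrow> real \<Rightarrow> real \<Rightarrow> real \<Rightarrow> real \<Rightarrow> real \<Rightarrow> real" where
  "Kfun \<mu> \<sigma> r u0 \<beta> t z =
     (\<beta> * u0 - 1) / r + \<beta> / theta2 \<mu> \<sigma> r u0 * exp (- theta2 \<mu> \<sigma> r u0 * (z - t))"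

definition gfun :: "real \<Rightarrow> real \<Rightarrow> real \<Rightarrow> real \<Rightarrow> real \<Rightarrow> real \<Rightarrow> real \<Rightarrow> real \<Rightarrow> real \<Rightarrow> real" where
  "gfun \<mu> \<sigma> r u0 \<beta> d C t z =
     (if z \<le> t then Hfun \<mu> \<sigma> r \<beta> d C t z else Kfun \<mu> \<sigma> r u0 \<beta> t z)"

definition solves_problem2 ::
  "real \<Rightarrow> real \<Rightarrow> real \<Rightarrow> real \<Rightarrow> real \<Rightarrow> real \<Rightarrow> (real \<Rightarrow> real) \<Rightarrow> bool" where
  "solves_problem2 \<mu> \<sigma> r u0 \<beta> d g \<longleftrightarrow>
     bounded (g ` {d..}) \<and>
     (\<exists>g1 g2.
        (\<forall>z\<ge>d. (g has_real_derivative g1 z) (at z within {d..})) \<and>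
        (\<forall>z\<ge>d. (g1 has_real_derivative g2 z) (at z within {d..})) \<and>
        continuous_on {d..} g2 \<and>
        (\<forall>z\<ge>d. - r * g z - \<mu> * g1 z + \<sigma>\<^sup>2 / 2 * g2 z
                 + (SUP u\<in>{0..u0}. (\<beta> + g1 z) * u) = 1))"

end

theory Submission
  imports Defs
begin

(*
  Both pieces of g_C solve the linear ODE of their regime exactly, and H_{C,t} and K_t have the
  same slope -beta at t for every C and t. So g_C is C^2, and a bounded solution of Problem 2,
  precisely when the values match, H_{C,t}(t) = K_t(t) = xi_2(beta): continuity at t forces this,
  and conversely the two ODEs then force H'' = K'' = beta alpha_2 > 0 at t, which makes
  beta + H' <= 0 on [d,t] (the supremum is attained at u = 0) while beta + K' >= 0 beyond t
  (attained at u = u0). Clearing denominators turns H_{C,t}(t) = xi_2(beta) into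
  phi(t - d) = (1 + gamma_1/gamma_2)(C + 1/r) for an explicit phi that is strictly increasing and
  unbounded on [0,oo) with phi(0) = (1 + gamma_1/gamma_2)(xi_2(beta) + 1/r). Existence and
  uniqueness of the fit point, its monotonicity in C and z_g = d for C = xi_2(beta) follow.
*)

lemma theta1_char_eq:
  fixes \<mu> \<sigma> r u :: real
  assumes "\<sigma> \<noteq> 0" and "r \<ge> 0"
  shows "\<sigma>\<^sup>2 / 2 * (theta1 \<mu> \<sigma> r u)\<^sup>2 - (\<mu> - u) * theta1 \<mu> \<sigma> r u - r = 0"
proof -
  have "(sqrt ((\<mu> - u)\<^sup>2 + 2 * r * \<sigma>\<^sup>2))\<^sup>2 = (\<mu> - u)\<^sup>2 + 2 * r * \<sigma>\<^sup>2"
    using assms by simp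
  then show ?thesis using assms unfolding theta1_def by (simp add: field_simps power2_eq_square)
qed

lemma theta2_char_eq:
  fixes \<mu> \<sigma> r u :: real
  assumes "\<sigma> \<noteq> 0" and "r \<ge> 0"
  shows "\<sigma>\<^sup>2 / 2 * (theta2 \<mu> \<sigma> r u)\<^sup>2 + (\<mu> - u) * theta2 \<mu> \<sigma> r u - r = 0"
proof -
  have "(sqrt ((\<mu> - u)\<^sup>2 + 2 * r * \<sigma>\<^sup>2))\<^sup>2 = (\<mu> - u)\<^sup>2 + 2 * r * \<sigma>\<^sup>2"
    using assms by simp
  then show ?thesis using assms unfolding theta2_def by (simp add: field_simps power2_eq_square)
qed

lemma sqrt_discriminant_gt_abs:
  fixes v \<sigma> r :: real
  assumes "\<sigma> \<noteq> 0" and "r > 0"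
  shows "\<bar>v\<bar> < sqrt (v\<^sup>2 + 2 * r * \<sigma>\<^sup>2)"
  using assms real_sqrt_less_mono[of "v\<^sup>2" "v\<^sup>2 + 2 * r * \<sigma>\<^sup>2"] by simp

lemma theta1_pos:
  fixes \<mu> \<sigma> r u :: real
  assumes "\<sigma> \<noteq> 0" and "r > 0"
  shows "theta1 \<mu> \<sigma> r u > 0"
  using sqrt_discriminant_gt_abs[OF assms, of "\<mu> - u"] assms unfolding theta1_def by simp

lemma theta2_pos:
  fixes \<mu> \<sigma> r u :: real
  assumes "\<sigma> \<noteq> 0" and "r > 0"
  shows "theta2 \<mu> \<sigma> r u > 0"
  using sqrt_discriminant_gt_abs[OF assms, of "\<mu> - u"] assms unfolding theta2_def by simp

lemma SUP_linear_atLeastAtMost: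
  fixes k u0 :: real
  assumes "u0 \<ge> 0"
  shows "(SUP u\<in>{0..u0}. k * u) = max 0 k * u0"
proof (cases "k \<le> 0")
  case True
  have "(SUP u\<in>{0..u0}. k * u) = k * 0"
    by (rule cSup_eq_maximum) (use True assms in \<open>auto intro!: mult_nonpos_nonneg simp: image_iff\<close>)
  then show ?thesis
    using True by simp
next
  case False
  have "(SUP u\<in>{0..u0}. k * u) = k * u0"
    by (rule cSup_eq_maximum) (use False assms in \<open>auto intro!: mult_left_mono simp: image_iff\<close>)
  then show ?thesis
    using False by simp
qed

lemma has_real_derivative_if_le:
  fixes f g f' g' :: "real \<Rightarrow> real"
  assumes "\<And>x. (f has_real_derivative f' x) (at x)" and "\<And>x. (g has_real_derivative g' x) (at x)"
    and "f t = g t" and "f' t = g' t"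
  shows "((\<lambda>x. if x \<le> t then f x else g x) has_real_derivative (if x \<le> t then f' x else g' x)) (at x)"
proof -
  have "closure {..t} \<inter> closure {t<..} = {t}" by auto
  then have "((\<lambda>x. if x \<in> {..t} then f x else g x) has_vector_derivative
      (if x \<in> {..t} then f' x else g' x)) (at x)"
    using assms by (intro has_vector_derivative_If_within_closures[where T = "{t<..}"])
      (auto simp: has_real_derivative_iff_has_vector_derivative[symmetric] intro: has_field_derivative_at_within)
  then show ?thesis by (simp add: has_real_derivative_iff_has_vector_derivative)
qed

lemma exp_combination_nonpos:
  fixes a b k \<beta> u :: real
  assumes "a > 0" and "b > 0" and "\<beta> > 0" and "u \<ge> 0" and "k * (a + b) + \<beta> * b > 0"
  shows "k * (exp (- a * u) - exp (b * u)) + \<beta> * (1 - exp (b * u)) \<le> 0"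
proof -
  have exp_a: "1 - a * u \<le> exp (- a * u)" "exp (- a * u) \<le> 1"
    using exp_ge_add_one_self[of "- a * u"] assms by auto
  have exp_b: "1 + b * u \<le> exp (b * u)" "1 \<le> exp (b * u)"
    using exp_ge_add_one_self[of "b * u"] assms by auto
  show ?thesis
  proof (cases "k \<ge> 0")
    case True
    then show ?thesis
      using exp_a exp_b assms by (smt (verit) mult_nonneg_nonpos)
  next
    case False
    have chord: "b * (exp (b * u) - exp (- a * u)) \<le> (a + b) * (exp (b * u) - 1)"
      using mult_left_mono[OF exp_a(1), of b] mult_left_mono[OF exp_b(1), of a] assms
      by (simp add: algebra_simps)
    have "- k * (a + b) * (exp (b * u) - exp (- a * u)) \<le> \<beta> * b * (exp (b * u) - exp (- a * u))"
      using assms exp_a(2) exp_b(2) by (intro mult_right_mono) linarith+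
    also have "\<dots> \<le> \<beta> * (a + b) * (exp (b * u) - 1)"
      using mult_left_mono[OF chord, of \<beta>] assms by (simp add: mult.assoc mult.left_commute)
    finally have "(a + b) * (- k * (exp (b * u) - exp (- a * u))) \<le> (a + b) * (\<beta> * (exp (b * u) - 1))"
      by (simp add: algebra_simps)
    then have "- k * (exp (b * u) - exp (- a * u)) \<le> \<beta> * (exp (b * u) - 1)"
      by (rule mult_left_le_imp_le) (use assms in simp)
    then show ?thesis by (simp add: algebra_simps)
  qed
qed

locale problem2_setting =
  fixes \<mu> \<sigma> r u0 \<beta> d :: real
  assumes \<sigma>_pos: "\<sigma> > 0" and u0_pos: "u0 > 0" and r_pos: "r > 0" and \<beta>_pos: "\<beta> > 0"
begin

abbreviation "\<gamma>\<^sub>1 \<equiv> theta1 \<mu> \<sigma> r 0"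
abbreviation "\<gamma>\<^sub>2 \<equiv> theta2 \<mu> \<sigma> r 0"
abbreviation "\<alpha>\<^sub>2 \<equiv> theta2 \<mu> \<sigma> r u0"
abbreviation "\<xi> \<equiv> xi2 \<mu> \<sigma> r u0 \<beta>"
abbreviation "H \<equiv> Hfun \<mu> \<sigma> r \<beta> d"
abbreviation "K \<equiv> Kfun \<mu> \<sigma> r u0 \<beta>"
abbreviation "G \<equiv> gfun \<mu> \<sigma> r u0 \<beta> d"

lemma gamma1_pos: "\<gamma>\<^sub>1 > 0" and gamma2_pos: "\<gamma>\<^sub>2 > 0" and alpha2_pos: "\<alpha>\<^sub>2 > 0"
  using theta1_pos theta2_pos \<sigma>_pos r_pos by auto

definition A_coef :: "real \<Rightarrow> real \<Rightarrow> real" where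
  "A_coef C t = (C + 1 / r - \<beta> / \<gamma>\<^sub>2 * exp (- \<gamma>\<^sub>2 * (d - t)))
     / (exp (\<gamma>\<^sub>1 * d) + \<gamma>\<^sub>1 / \<gamma>\<^sub>2 * exp ((\<gamma>\<^sub>1 + \<gamma>\<^sub>2) * t) * exp (- \<gamma>\<^sub>2 * d))"

definition dH :: "real \<Rightarrow> real \<Rightarrow> real \<Rightarrow> real" where
  "dH C t z = A_coef C t * (\<gamma>\<^sub>1 * exp (\<gamma>\<^sub>1 * z) - \<gamma>\<^sub>1 * exp ((\<gamma>\<^sub>1 + \<gamma>\<^sub>2) * t) * exp (- \<gamma>\<^sub>2 * z))
     - \<beta> * exp (- \<gamma>\<^sub>2 * (z - t))"

definition d2H :: "real \<Rightarrow> real \<Rightarrow> real \<Rightarrow> real" where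
  "d2H C t z = A_coef C t * (\<gamma>\<^sub>1\<^sup>2 * exp (\<gamma>\<^sub>1 * z) + \<gamma>\<^sub>1 * \<gamma>\<^sub>2 * exp ((\<gamma>\<^sub>1 + \<gamma>\<^sub>2) * t) * exp (- \<gamma>\<^sub>2 * z))
     + \<beta> * \<gamma>\<^sub>2 * exp (- \<gamma>\<^sub>2 * (z - t))"

definition dK :: "real \<Rightarrow> real \<Rightarrow> real" where
  "dK t z = - \<beta> * exp (- \<alpha>\<^sub>2 * (z - t))"

definition d2K :: "real \<Rightarrow> real \<Rightarrow> real" where
  "d2K t z = \<beta> * \<alpha>\<^sub>2 * exp (- \<alpha>\<^sub>2 * (z - t))"

lemma H_eq: "H C t = (\<lambda>z. - 1 / r
    + A_coef C t * (exp (\<gamma>\<^sub>1 * z) + \<gamma>\<^sub>1 / \<gamma>\<^sub>2 * exp ((\<gamma>\<^sub>1 + \<gamma>\<^sub>2) * t) * exp (- \<gamma>\<^sub>2 * z))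
    + \<beta> / \<gamma>\<^sub>2 * exp (- \<gamma>\<^sub>2 * (z - t)))"
  by (simp add: fun_eq_iff Hfun_def A_coef_def Let_def)

lemma has_real_derivative_H: "(H C t has_real_derivative dH C t z) (at z)"
  unfolding H_eq using gamma2_pos
  by (auto intro!: derivative_eq_intros simp: dH_def algebra_simps)

lemma has_real_derivative_dH: "(dH C t has_real_derivative d2H C t z) (at z)"
  unfolding dH_def[abs_def]
  by (auto intro!: derivative_eq_intros simp: d2H_def algebra_simps power2_eq_square)

lemma has_real_derivative_K: "(K t has_real_derivative dK t z) (at z)"
  unfolding Kfun_def[abs_def] using alpha2_pos
  by (auto intro!: derivative_eq_intros simp: dK_def algebra_simps)

lemma has_real_derivative_dK: "(dK t has_real_derivative d2K t z) (at z)"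
  unfolding dK_def[abs_def]
  by (auto intro!: derivative_eq_intros simp: d2K_def algebra_simps)

lemma H_ode: "- r * H C t z - \<mu> * dH C t z + \<sigma>\<^sup>2 / 2 * d2H C t z = 1"
proof -
  have char1: "\<sigma>\<^sup>2 / 2 * \<gamma>\<^sub>1\<^sup>2 - \<mu> * \<gamma>\<^sub>1 - r = 0"
    using theta1_char_eq[of \<sigma> r \<mu> 0] \<sigma>_pos r_pos by simp
  have char2: "\<sigma>\<^sup>2 / 2 * \<gamma>\<^sub>2\<^sup>2 + \<mu> * \<gamma>\<^sub>2 - r = 0"
    using theta2_char_eq[of \<sigma> r \<mu> 0] \<sigma>_pos r_pos by simp
  define A E\<^sub>1 E\<^sub>2 E\<^sub>3 where "A = A_coef C t" and "E\<^sub>1 = exp (\<gamma>\<^sub>1 * z)"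
    and "E\<^sub>2 = exp ((\<gamma>\<^sub>1 + \<gamma>\<^sub>2) * t) * exp (- \<gamma>\<^sub>2 * z)" and "E\<^sub>3 = exp (- \<gamma>\<^sub>2 * (z - t))"
  have "- r * H C t z - \<mu> * dH C t z + \<sigma>\<^sup>2 / 2 * d2H C t z
      = 1 + A * E\<^sub>1 * (\<sigma>\<^sup>2 / 2 * \<gamma>\<^sub>1\<^sup>2 - \<mu> * \<gamma>\<^sub>1 - r)
          + (A * \<gamma>\<^sub>1 * E\<^sub>2 + \<beta> * E\<^sub>3) / \<gamma>\<^sub>2 * (\<sigma>\<^sup>2 / 2 * \<gamma>\<^sub>2\<^sup>2 + \<mu> * \<gamma>\<^sub>2 - r)"
    unfolding H_eq dH_def d2H_def A_def [symmetric] E\<^sub>1_def [symmetric] E\<^sub>3_def [symmetric]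
      mult.assoc [of _ "exp ((\<gamma>\<^sub>1 + \<gamma>\<^sub>2) * t)"] E\<^sub>2_def [unfolded mult.assoc, symmetric]
    using r_pos gamma2_pos by (simp add: field_simps power2_eq_square)
  also have "\<dots> = 1" unfolding char1 char2 by simp
  finally show ?thesis .
qed

lemma K_ode: "- r * K t z - \<mu> * dK t z + \<sigma>\<^sup>2 / 2 * d2K t z + (\<beta> + dK t z) * u0 = 1"
proof -
  have char: "\<sigma>\<^sup>2 / 2 * \<alpha>\<^sub>2\<^sup>2 + (\<mu> - u0) * \<alpha>\<^sub>2 - r = 0"
    using theta2_char_eq[of \<sigma> r \<mu> u0] \<sigma>_pos r_pos by simp
  define E where "E = exp (- \<alpha>\<^sub>2 * (z - t))"
  have "- r * K t z - \<mu> * dK t z + \<sigma>\<^sup>2 / 2 * d2K t z + (\<beta> + dK t z) * u0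
      = 1 + \<beta> * E / \<alpha>\<^sub>2 * (\<sigma>\<^sup>2 / 2 * \<alpha>\<^sub>2\<^sup>2 + (\<mu> - u0) * \<alpha>\<^sub>2 - r)"
    unfolding Kfun_def dK_def d2K_def E_def [symmetric]
    using r_pos alpha2_pos by (simp add: field_simps power2_eq_square)
  also have "\<dots> = 1" unfolding char by simp
  finally show ?thesis .
qed

lemma K_diag: "K t t = \<xi>" and dK_diag: "dK t t = - \<beta>" and d2K_diag: "d2K t t = \<beta> * \<alpha>\<^sub>2"
  by (simp_all add: Kfun_def xi2_def dK_def d2K_def)

lemma dH_diag: "dH C t t = - \<beta>"
  by (simp add: dH_def mult_exp_exp algebra_simps)

lemma d2H_diag:
  assumes "H C t t = \<xi>"
  shows "d2H C t t = \<beta> * \<alpha>\<^sub>2"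
proof -
  have "- r * \<xi> + \<mu> * \<beta> + \<sigma>\<^sup>2 / 2 * d2H C t t = 1"
    using H_ode[of C t t] by (simp add: assms dH_diag)
  moreover have "- r * \<xi> + \<mu> * \<beta> + \<sigma>\<^sup>2 / 2 * (\<beta> * \<alpha>\<^sub>2) = 1"
    using K_ode[of t t] by (simp add: K_diag dK_diag d2K_diag)
  ultimately have "\<sigma>\<^sup>2 / 2 * d2H C t t = \<sigma>\<^sup>2 / 2 * (\<beta> * \<alpha>\<^sub>2)"
    by linarith
  then show ?thesis
    using \<sigma>_pos by simp
qed

lemma dH_nonpos:
  assumes "H C t t = \<xi>" and "z \<le> t"
  shows "\<beta> + dH C t z \<le> 0"
proof -
  define a where "a = \<gamma>\<^sub>1 * A_coef C t * exp (\<gamma>\<^sub>1 * t)"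
  have "\<beta> + dH C t z = a * (exp (- \<gamma>\<^sub>1 * (t - z)) - exp (\<gamma>\<^sub>2 * (t - z))) + \<beta> * (1 - exp (\<gamma>\<^sub>2 * (t - z)))"
    unfolding dH_def a_def by (simp add: mult_exp_exp algebra_simps)
  moreover have "a * (\<gamma>\<^sub>1 + \<gamma>\<^sub>2) + \<beta> * \<gamma>\<^sub>2 = d2H C t t"
    unfolding d2H_def a_def by (simp add: mult_exp_exp algebra_simps power2_eq_square)
  moreover have "d2H C t t > 0"
    using d2H_diag[OF assms(1)] \<beta>_pos alpha2_pos by simp
  ultimately show ?thesis
    using exp_combination_nonpos[OF gamma1_pos gamma2_pos \<beta>_pos, of "t - z" a] assms(2) by simp
qed

lemma dK_nonneg:
  assumes "t \<le> z"
  shows "\<beta> + dK t z \<ge> 0"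
proof -
  have "exp (- \<alpha>\<^sub>2 * (z - t)) \<le> 1"
    using assms alpha2_pos by simp
  then show ?thesis
    using \<beta>_pos mult_left_le[of "exp (- \<alpha>\<^sub>2 * (z - t))" \<beta>] by (simp add: dK_def)
qed

lemma H_at_d: "H C t d = C"
proof -
  have "exp (\<gamma>\<^sub>1 * d) + \<gamma>\<^sub>1 / \<gamma>\<^sub>2 * exp ((\<gamma>\<^sub>1 + \<gamma>\<^sub>2) * t) * exp (- \<gamma>\<^sub>2 * d) > 0"
    using gamma1_pos gamma2_pos by (intro add_pos_nonneg) auto
  then show ?thesis
    unfolding H_eq A_coef_def by simp
qed

lemma gfun_at_d: "d \<le> t \<Longrightarrow> G C t d = C"
  by (simp add: gfun_def H_at_d)

lemma bounded_gfun: "bounded (G C t ` {d..})"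
proof -
  have "bounded (H C t ` {d..t})"
    by (intro compact_imp_bounded compact_continuous_image continuous_at_imp_continuous_on ballI
        DERIV_isCont[OF has_real_derivative_H] compact_Icc)
  moreover have "K t ` {t<..} \<subseteq> {(\<beta> * u0 - 1) / r .. (\<beta> * u0 - 1) / r + \<beta> / \<alpha>\<^sub>2}"
  proof
    fix y assume "y \<in> K t ` {t<..}"
    then obtain z where "t < z" and y: "y = K t z" by auto
    then have "exp (- \<alpha>\<^sub>2 * (z - t)) \<le> 1"
      using alpha2_pos by simp
    then show "y \<in> {(\<beta> * u0 - 1) / r .. (\<beta> * u0 - 1) / r + \<beta> / \<alpha>\<^sub>2}"
      using \<beta>_pos alpha2_pos mult_left_le[of "exp (- \<alpha>\<^sub>2 * (z - t))" "\<beta> / \<alpha>\<^sub>2"]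
      by (simp add: y Kfun_def)
  qed
  moreover have "G C t ` {d..} \<subseteq> H C t ` {d..t} \<union> K t ` {t<..}"
    by (auto simp: gfun_def)
  ultimately show ?thesis
    by (meson bounded_Un bounded_closed_interval bounded_subset)
qed

definition dG :: "real \<Rightarrow> real \<Rightarrow> real \<Rightarrow> real" where
  "dG C t z = (if z \<le> t then dH C t z else dK t z)"

definition d2G :: "real \<Rightarrow> real \<Rightarrow> real \<Rightarrow> real" where
  "d2G C t z = (if z \<le> t then d2H C t z else d2K t z)"

lemma gfun_eq: "G C t = (\<lambda>z. if z \<le> t then H C t z else K t z)"
  by (simp add: fun_eq_iff gfun_def)

lemma has_real_derivative_gfun:
  assumes "H C t t = \<xi>"
  shows "(G C t has_real_derivative dG C t z) (at z)"
  unfolding gfun_eq dG_def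
  by (rule has_real_derivative_if_le[OF has_real_derivative_H has_real_derivative_K])
    (simp_all add: assms K_diag dH_diag dK_diag)

lemma has_real_derivative_dG:
  assumes "H C t t = \<xi>"
  shows "(dG C t has_real_derivative d2G C t z) (at z)"
  unfolding dG_def [abs_def] d2G_def
  by (rule has_real_derivative_if_le[OF has_real_derivative_dH has_real_derivative_dK])
    (simp_all add: d2H_diag[OF assms] dH_diag dK_diag d2K_diag)

lemma continuous_on_d2G:
  assumes "H C t t = \<xi>"
  shows "continuous_on UNIV (d2G C t)"
proof -
  have "continuous_on UNIV (d2H C t)" "continuous_on UNIV (d2K t)"
    unfolding d2H_def [abs_def] d2K_def [abs_def] by (intro continuous_intros)+
  then have "continuous_on ({..t} \<union> {t..}) (d2G C t)"
    unfolding d2G_def [abs_def] using d2H_diag[OF assms] d2K_diag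
    by (intro continuous_on_cases) (auto intro: continuous_on_subset)
  moreover have "{..t} \<union> {t..} = (UNIV :: real set)"
    by auto
  ultimately show ?thesis
    by simp
qed

lemma gfun_hjb:
  assumes "H C t t = \<xi>"
  shows "- r * G C t z - \<mu> * dG C t z + \<sigma>\<^sup>2 / 2 * d2G C t z + (SUP u\<in>{0..u0}. (\<beta> + dG C t z) * u) = 1"
proof (cases "z \<le> t")
  case True
  then show ?thesis
    using H_ode[of C t z] dH_nonpos[OF assms True]
    by (simp add: gfun_def dG_def d2G_def SUP_linear_atLeastAtMost[OF less_imp_le[OF u0_pos]])
next
  case False
  then show ?thesis
    using K_ode[of t z] dK_nonneg[of t z]
    by (simp add: gfun_def dG_def d2G_def SUP_linear_atLeastAtMost[OF less_imp_le[OF u0_pos]])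
qed

lemma solves_problem2_gfun:
  assumes "H C t t = \<xi>"
  shows "solves_problem2 \<mu> \<sigma> r u0 \<beta> d (G C t)"
  unfolding solves_problem2_def
  using bounded_gfun has_real_derivative_gfun[OF assms] has_real_derivative_dG[OF assms]
    continuous_on_d2G[OF assms] gfun_hjb[OF assms]
  by (intro conjI exI[of _ "dG C t"] exI[of _ "d2G C t"])
    (auto intro: has_field_derivative_at_within continuous_on_subset)

lemma smooth_fit_if_solves_problem2:
  assumes "d < t" and "solves_problem2 \<mu> \<sigma> r u0 \<beta> d (G C t)"
  shows "H C t t = \<xi>"
proof -
  obtain g1 where "\<forall>z\<ge>d. (G C t has_real_derivative g1 z) (at z within {d..})"
    using assms(2) unfolding solves_problem2_def by blast
  then have "(G C t has_real_derivative g1 t) (at t within {d..})"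
    using assms(1) by simp
  then have "continuous (at t within {d..}) (G C t)"
    by (rule DERIV_continuous)
  then have "(G C t \<longlongrightarrow> G C t t) (at_right t)"
    using assms(1) by (auto simp: continuous_within intro: tendsto_within_subset)
  moreover have "(G C t \<longlongrightarrow> K t t) (at_right t)"
  proof (rule Lim_transform_eventually)
    show "(K t \<longlongrightarrow> K t t) (at_right t)"
      using DERIV_isCont[OF has_real_derivative_K] by (simp add: isCont_def filterlim_at_split)
    show "\<forall>\<^sub>F z in at_right t. K t z = G C t z"
      by (rule eventually_at_rightI[of t "t + 1"]) (auto simp: gfun_def)
  qed
  ultimately have "G C t t = K t t"
    using tendsto_unique trivial_limit_at_right_real by blast
  then show ?thesis
    by (simp add: gfun_def K_diag)
qed

definition fit_fun :: "real \<Rightarrow> real" where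
  "fit_fun s = (\<xi> + 1 / r - \<beta> / \<gamma>\<^sub>2) * exp (- \<gamma>\<^sub>1 * s)
     + (\<gamma>\<^sub>1 / \<gamma>\<^sub>2 * (\<xi> + 1 / r) + \<beta> / \<gamma>\<^sub>2) * exp (\<gamma>\<^sub>2 * s)"

lemma H_diag_minus_xi:
  "H C (d + s) (d + s) - \<xi> = exp (\<gamma>\<^sub>1 * s) / (1 + \<gamma>\<^sub>1 / \<gamma>\<^sub>2 * exp (\<gamma>\<^sub>1 * s) * exp (\<gamma>\<^sub>2 * s))
     * ((1 + \<gamma>\<^sub>1 / \<gamma>\<^sub>2) * (C + 1 / r) - fit_fun s)"
proof -
  define e\<^sub>1 e\<^sub>2 e p where "e\<^sub>1 = exp (\<gamma>\<^sub>1 * s)" and "e\<^sub>2 = exp (\<gamma>\<^sub>2 * s)" and "e = exp (\<gamma>\<^sub>1 * d)"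
    and "p = \<gamma>\<^sub>1 / \<gamma>\<^sub>2"
  define N where "N = 1 + p * e\<^sub>1 * e\<^sub>2"
  have pos: "e\<^sub>1 > 0" "e > 0" "N > 0"
    using gamma1_pos gamma2_pos by (auto simp: e\<^sub>1_def e\<^sub>2_def e_def p_def N_def intro!: add_pos_pos)
  have exps: "exp (\<gamma>\<^sub>1 * (d + s)) = e * e\<^sub>1"
    "exp ((\<gamma>\<^sub>1 + \<gamma>\<^sub>2) * (d + s)) * exp (- \<gamma>\<^sub>2 * d) = e * e\<^sub>1 * e\<^sub>2"
    "exp ((\<gamma>\<^sub>1 + \<gamma>\<^sub>2) * (d + s)) * exp (- \<gamma>\<^sub>2 * (d + s)) = e * e\<^sub>1"
    "exp (- \<gamma>\<^sub>2 * (d - (d + s))) = e\<^sub>2" "exp (- \<gamma>\<^sub>1 * s) = 1 / e\<^sub>1"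
    by (simp_all add: e\<^sub>1_def e\<^sub>2_def e_def mult_exp_exp exp_minus field_simps)
  have "H C (d + s) (d + s) = - 1 / r
      + (C + 1 / r - \<beta> / \<gamma>\<^sub>2 * exp (- \<gamma>\<^sub>2 * (d - (d + s))))
        / (exp (\<gamma>\<^sub>1 * d) + \<gamma>\<^sub>1 / \<gamma>\<^sub>2 * (exp ((\<gamma>\<^sub>1 + \<gamma>\<^sub>2) * (d + s)) * exp (- \<gamma>\<^sub>2 * d)))
        * (exp (\<gamma>\<^sub>1 * (d + s)) + \<gamma>\<^sub>1 / \<gamma>\<^sub>2 * (exp ((\<gamma>\<^sub>1 + \<gamma>\<^sub>2) * (d + s)) * exp (- \<gamma>\<^sub>2 * (d + s))))
      + \<beta> / \<gamma>\<^sub>2"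
    by (simp add: H_eq A_coef_def mult.assoc)
  also have "\<dots> = - 1 / r + (C + 1 / r - \<beta> / \<gamma>\<^sub>2 * e\<^sub>2) / (e * N) * (e * ((1 + p) * e\<^sub>1)) + \<beta> / \<gamma>\<^sub>2"
    unfolding exps e_def [symmetric] p_def [symmetric] N_def by (simp add: algebra_simps)
  also have "\<dots> = ((\<beta> / \<gamma>\<^sub>2 - 1 / r) * N + (C + 1 / r - \<beta> / \<gamma>\<^sub>2 * e\<^sub>2) * ((1 + p) * e\<^sub>1)) / N"
    using pos by (simp add: field_simps)
  finally have "H C (d + s) (d + s) - \<xi>
      = ((\<beta> / \<gamma>\<^sub>2 - 1 / r - \<xi>) * N + (C + 1 / r - \<beta> / \<gamma>\<^sub>2 * e\<^sub>2) * ((1 + p) * e\<^sub>1)) / N"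
    using pos by (simp add: field_simps)
  also have "(\<beta> / \<gamma>\<^sub>2 - 1 / r - \<xi>) * N + (C + 1 / r - \<beta> / \<gamma>\<^sub>2 * e\<^sub>2) * ((1 + p) * e\<^sub>1)
      = e\<^sub>1 * ((1 + p) * (C + 1 / r) - fit_fun s)"
    unfolding fit_fun_def exps e\<^sub>1_def [symmetric] e\<^sub>2_def [symmetric] p_def [symmetric] N_def
    using pos r_pos gamma2_pos by (simp add: field_simps)
  finally show ?thesis
    unfolding e\<^sub>1_def e\<^sub>2_def p_def N_def by simp
qed

lemma smooth_fit_iff: "H C t t = \<xi> \<longleftrightarrow> fit_fun (t - d) = (1 + \<gamma>\<^sub>1 / \<gamma>\<^sub>2) * (C + 1 / r)"
proof -
  have "exp (\<gamma>\<^sub>1 * (t - d)) / (1 + \<gamma>\<^sub>1 / \<gamma>\<^sub>2 * exp (\<gamma>\<^sub>1 * (t - d)) * exp (\<gamma>\<^sub>2 * (t - d))) > 0"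
    using gamma1_pos gamma2_pos by (intro divide_pos_pos add_pos_pos) auto
  then show ?thesis
    using H_diag_minus_xi[of C "t - d"] by auto
qed

lemma xi_plus_inverse_r_pos: "\<xi> + 1 / r > 0"
proof -
  have "\<xi> + 1 / r = \<beta> * u0 / r + \<beta> / \<alpha>\<^sub>2"
    unfolding xi2_def using r_pos by (simp add: field_simps)
  also have "\<dots> > 0"
    using \<beta>_pos u0_pos r_pos alpha2_pos by (intro add_pos_pos divide_pos_pos mult_pos_pos)
  finally show ?thesis .
qed

lemma fit_fun_0: "fit_fun 0 = (1 + \<gamma>\<^sub>1 / \<gamma>\<^sub>2) * (\<xi> + 1 / r)"
  unfolding fit_fun_def by (simp add: field_simps)

lemma fit_fun_growth_coeff_pos: "\<gamma>\<^sub>1 / \<gamma>\<^sub>2 * (\<xi> + 1 / r) + \<beta> / \<gamma>\<^sub>2 > 0"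
  using xi_plus_inverse_r_pos gamma1_pos gamma2_pos \<beta>_pos by (intro add_pos_pos) auto

lemma continuous_on_fit_fun: "continuous_on A fit_fun"
  unfolding fit_fun_def [abs_def] by (intro continuous_intros)

lemma strict_mono_on_fit_fun: "strict_mono_on {0..} fit_fun"
proof (rule strict_mono_onI)
  define Y Q where "Y = \<xi> + 1 / r - \<beta> / \<gamma>\<^sub>2" and "Q = \<gamma>\<^sub>1 / \<gamma>\<^sub>2 * (\<xi> + 1 / r) + \<beta> / \<gamma>\<^sub>2"
  have Q_pos: "Q > 0"
    unfolding Q_def by (rule fit_fun_growth_coeff_pos)
  have gap: "\<gamma>\<^sub>2 * Q - \<gamma>\<^sub>1 * Y > 0"
  proof -
    have "\<gamma>\<^sub>2 * Q - \<gamma>\<^sub>1 * Y = \<beta> * (1 + \<gamma>\<^sub>1 / \<gamma>\<^sub>2)"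
      unfolding Q_def Y_def using gamma2_pos by (simp add: field_simps)
    moreover have "\<beta> * (1 + \<gamma>\<^sub>1 / \<gamma>\<^sub>2) > 0"
      using \<beta>_pos gamma1_pos gamma2_pos by (intro mult_pos_pos add_pos_pos divide_pos_pos) auto
    ultimately show ?thesis
      by simp
  qed
  have deriv: "(fit_fun has_real_derivative \<gamma>\<^sub>2 * Q * exp (\<gamma>\<^sub>2 * x) - \<gamma>\<^sub>1 * Y * exp (- \<gamma>\<^sub>1 * x)) (at x)" for x
    unfolding fit_fun_def [abs_def] Y_def [symmetric] Q_def [symmetric]
    by (auto intro!: derivative_eq_intros simp: algebra_simps)
  have deriv_pos: "\<gamma>\<^sub>2 * Q * exp (\<gamma>\<^sub>2 * x) - \<gamma>\<^sub>1 * Y * exp (- \<gamma>\<^sub>1 * x) > 0" if "x \<ge> 0" for x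
  proof -
    have "\<gamma>\<^sub>2 * Q \<le> \<gamma>\<^sub>2 * Q * exp (\<gamma>\<^sub>2 * x)"
      using that gamma2_pos Q_pos by simp
    moreover have "Y * exp (- \<gamma>\<^sub>1 * x) \<le> max 0 Y"
    proof (cases "Y \<le> 0")
      case True
      then show ?thesis
        by (simp add: mult_nonpos_nonneg)
    next
      case False
      have "exp (- \<gamma>\<^sub>1 * x) \<le> 1"
        using that gamma1_pos by simp
      then show ?thesis
        using False mult_left_le[of "exp (- \<gamma>\<^sub>1 * x)" Y] by simp
    qed
    then have "\<gamma>\<^sub>1 * Y * exp (- \<gamma>\<^sub>1 * x) \<le> \<gamma>\<^sub>1 * max 0 Y"
      using gamma1_pos by (simp add: mult.assoc)
    moreover have "\<gamma>\<^sub>1 * max 0 Y < \<gamma>\<^sub>2 * Q"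
      using gap gamma2_pos Q_pos by (cases "Y \<le> 0") auto
    ultimately show ?thesis
      by linarith
  qed
  fix x y :: real
  assume "x \<in> {0..}" and "y \<in> {0..}" and "x < y"
  then show "fit_fun x < fit_fun y"
    using deriv deriv_pos by (intro DERIV_pos_imp_increasing[OF \<open>x < y\<close>]) force
qed

lemma fit_fun_unbounded: "\<exists>s\<ge>0. M \<le> fit_fun s"
proof -
  define Y Q where "Y = \<xi> + 1 / r - \<beta> / \<gamma>\<^sub>2" and "Q = \<gamma>\<^sub>1 / \<gamma>\<^sub>2 * (\<xi> + 1 / r) + \<beta> / \<gamma>\<^sub>2"
  have Q_pos: "Q > 0"
    unfolding Q_def by (rule fit_fun_growth_coeff_pos)
  define s where "s = (\<bar>M\<bar> + \<bar>Y\<bar>) / (Q * \<gamma>\<^sub>2)"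
  have "s \<ge> 0"
    unfolding s_def using Q_pos gamma2_pos by simp
  have "exp (- \<gamma>\<^sub>1 * s) \<le> 1"
    using \<open>s \<ge> 0\<close> gamma1_pos by simp
  then have "- \<bar>Y\<bar> \<le> - \<bar>Y\<bar> * exp (- \<gamma>\<^sub>1 * s)"
    using mult_left_le[of "exp (- \<gamma>\<^sub>1 * s)" "\<bar>Y\<bar>"] by simp
  also have "\<dots> \<le> Y * exp (- \<gamma>\<^sub>1 * s)"
    by (intro mult_right_mono) auto
  finally have "- \<bar>Y\<bar> \<le> Y * exp (- \<gamma>\<^sub>1 * s)" .
  moreover have "Q * (1 + \<gamma>\<^sub>2 * s) \<le> Q * exp (\<gamma>\<^sub>2 * s)"
    using Q_pos exp_ge_add_one_self[of "\<gamma>\<^sub>2 * s"] by simp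
  moreover have "Q * (1 + \<gamma>\<^sub>2 * s) = Q + \<bar>M\<bar> + \<bar>Y\<bar>"
    unfolding s_def using Q_pos gamma2_pos by (simp add: field_simps)
  ultimately have "M \<le> fit_fun s"
    unfolding fit_fun_def Y_def [symmetric] Q_def [symmetric] using Q_pos by linarith
  with \<open>s \<ge> 0\<close> show ?thesis
    by blast
qed

lemma fit_point_ex1:
  assumes "\<xi> < C"
  shows "\<exists>!z. d < z \<and> solves_problem2 \<mu> \<sigma> r u0 \<beta> d (G C z) \<and> G C z d = C"
proof -
  define c where "c = (1 + \<gamma>\<^sub>1 / \<gamma>\<^sub>2) * (C + 1 / r)"
  have "fit_fun 0 < c"
    unfolding fit_fun_0 c_def using assms gamma1_pos gamma2_pos
    by (intro mult_strict_left_mono add_pos_pos divide_pos_pos) auto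
  moreover obtain s\<^sub>1 where "s\<^sub>1 \<ge> 0" and "c \<le> fit_fun s\<^sub>1"
    using fit_fun_unbounded by blast
  ultimately obtain s where "0 \<le> s" and "fit_fun s = c"
    using IVT'[of fit_fun 0 c s\<^sub>1] continuous_on_fit_fun by force
  with \<open>fit_fun 0 < c\<close> have "0 < s"
    by (cases "s = 0") auto
  show ?thesis
  proof (rule ex1I[of _ "d + s"])
    have "H C (d + s) (d + s) = \<xi>"
      using smooth_fit_iff \<open>fit_fun s = c\<close> c_def by simp
    then show "d < d + s \<and> solves_problem2 \<mu> \<sigma> r u0 \<beta> d (G C (d + s)) \<and> G C (d + s) d = C"
      using \<open>0 < s\<close> solves_problem2_gfun gfun_at_d by simp
  next
    fix z
    assume z: "d < z \<and> solves_problem2 \<mu> \<sigma> r u0 \<beta> d (G C z) \<and> G C z d = C"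
    then have "fit_fun (z - d) = fit_fun s"
      using smooth_fit_if_solves_problem2 smooth_fit_iff \<open>fit_fun s = c\<close> c_def by simp
    then show "z = d + s"
      using strict_mono_on_eq[OF strict_mono_on_fit_fun] z \<open>0 \<le> s\<close> by force
  qed
qed

lemma fit_point_strict_mono:
  assumes "C\<^sub>1 < C\<^sub>2" and "d < z\<^sub>1" and "d < z\<^sub>2"
    and "solves_problem2 \<mu> \<sigma> r u0 \<beta> d (G C\<^sub>1 z\<^sub>1)" and "solves_problem2 \<mu> \<sigma> r u0 \<beta> d (G C\<^sub>2 z\<^sub>2)"
  shows "z\<^sub>1 < z\<^sub>2"
proof -
  have "(1 + \<gamma>\<^sub>1 / \<gamma>\<^sub>2) * (C\<^sub>1 + 1 / r) < (1 + \<gamma>\<^sub>1 / \<gamma>\<^sub>2) * (C\<^sub>2 + 1 / r)"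
    using assms(1) gamma1_pos gamma2_pos by (intro mult_strict_left_mono add_pos_pos divide_pos_pos) auto
  then have "fit_fun (z\<^sub>1 - d) < fit_fun (z\<^sub>2 - d)"
    using assms smooth_fit_if_solves_problem2 smooth_fit_iff by simp
  then show ?thesis
    using strict_mono_on_less[OF strict_mono_on_fit_fun] assms(2,3) by simp
qed

lemma fit_point_at_xi: "{t. d \<le> t \<and> H \<xi> t t = K t t} = {d}"
proof -
  have "H \<xi> t t = K t t \<longleftrightarrow> t = d" if "d \<le> t" for t
  proof -
    have "H \<xi> t t = K t t \<longleftrightarrow> fit_fun (t - d) = fit_fun 0"
      by (simp add: K_diag smooth_fit_iff fit_fun_0)
    also have "\<dots> \<longleftrightarrow> t = d"
      using strict_mono_on_eq[OF strict_mono_on_fit_fun, of "t - d" 0] that by simp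
    finally show ?thesis .
  qed
  then show ?thesis
    by force
qed

end

theorem proposition4p6:
  fixes \<mu> \<sigma> u0 r \<beta> d :: real
  assumes "\<sigma> > 0" and "u0 > 0" and "r > 0" and "\<beta> > 0" and "d > 0"
  shows
    "(\<forall>C. (\<beta> * u0 - 1) / r < C \<and> C < \<beta> * u0 / r \<and> C > xi2 \<mu> \<sigma> r u0 \<beta> \<longrightarrow>
        (\<exists>!z. z > d \<and> solves_problem2 \<mu> \<sigma> r u0 \<beta> d (gfun \<mu> \<sigma> r u0 \<beta> d C z)
                   \<and> gfun \<mu> \<sigma> r u0 \<beta> d C z d = C))
   \<and> (\<forall>C1 C2 z1 z2.
        (\<beta> * u0 - 1) / r < C1 \<and> C1 < \<beta> * u0 / r \<and> C1 > xi2 \<mu> \<sigma> r u0 \<beta> \<and>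
        (\<beta> * u0 - 1) / r < C2 \<and> C2 < \<beta> * u0 / r \<and> C2 > xi2 \<mu> \<sigma> r u0 \<beta> \<and>
        C1 < C2 \<and>
        z1 > d \<and> solves_problem2 \<mu> \<sigma> r u0 \<beta> d (gfun \<mu> \<sigma> r u0 \<beta> d C1 z1)
               \<and> gfun \<mu> \<sigma> r u0 \<beta> d C1 z1 d = C1 \<and>
        z2 > d \<and> solves_problem2 \<mu> \<sigma> r u0 \<beta> d (gfun \<mu> \<sigma> r u0 \<beta> d C2 z2)
               \<and> gfun \<mu> \<sigma> r u0 \<beta> d C2 z2 d = C2
        \<longrightarrow> z1 < z2)
   \<and> {t. t \<ge> d \<and> Hfun \<mu> \<sigma> r \<beta> d (xi2 \<mu> \<sigma> r u0 \<beta>) t t = Kfun \<mu> \<sigma> r u0 \<beta> t t} = {d}"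
proof -
  interpret problem2_setting \<mu> \<sigma> r u0 \<beta> d
    using assms by unfold_locales
  \<comment> \<open>Only \<open>C > \<xi>\<^sub>2(\<beta>)\<close> is needed.\<close>
  show ?thesis
    by (intro conjI allI impI; (elim conjE)?)
      (assumption | rule fit_point_ex1 fit_point_strict_mono fit_point_at_xi)+
qed

end
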